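(* Let $X_1,X_2,\dots$ be i.i.d. integer-valued random variables. Then for every $n\ge1$, $$H_2\Big(\sum_{i=1}^n X_i\Big)\le H_2\Big(\sum_{i=1}^{n+1}X_i\Big).$$
   Context: For an integer-valued random variable $Z$, $H_2(Z)=-\log\sum_{z}\mathbf P\{Z=z\}^2$ is its Rényi entropy of order $2$ (collision entropy). *)

theory Defs
  imports "HOL-Probability.Probability"
begin

text \<open>Renyi entropy of order 2 (collision entropy) of an integer-valued random
variable Z on the probability space M; natural logarithm (the base is irrelevant
for the inequality).\<close>
definition collision_entropy :: "'a measure \<Rightarrow> ('a \<Rightarrow> int) \<Rightarrow> real" where
  "collision_entropy M Z = - ln (\<Sum>\<^sub>\<infinity>z\<in>(UNIV::int set). (measure M {x \<in> space M. Z x = z})\<^sup>2)"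

end

theory Submission
  imports Defs
begin

text \<open>Write \<open>p\<^sub>Z(z) = P(Z = z)\<close>. For independent \<open>S\<close> and \<open>Y\<close> one has
\<open>p\<^sub>S\<^sub>+\<^sub>Y(z) = E[p\<^sub>S(z - Y)]\<close>, so by Cauchy--Schwarz \<open>p\<^sub>S\<^sub>+\<^sub>Y(z)\<^sup>2 \<le> E[p\<^sub>S(z - Y)\<^sup>2]\<close>.
Summing over \<open>z\<close> and exchanging sum and expectation, the inner sum
\<open>\<Sum>\<^sub>z p\<^sub>S(z - Y \<omega>)\<^sup>2\<close> is a translate of \<open>\<Sum>\<^sub>z p\<^sub>S(z)\<^sup>2\<close>. Hence adding an independent
summand never increases the collision probability, i.e. never decreases \<open>H\<^sub>2\<close>.\<close>

lemma infsum_nonneg_eq_enn2real_nn_integral: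
  fixes f :: "'b \<Rightarrow> real"
  assumes nonneg: "\<And>x. f x \<ge> 0"
  shows "infsum f UNIV = enn2real (\<integral>\<^sup>+x. ennreal (f x) \<partial>count_space UNIV)"
proof (cases "(\<integral>\<^sup>+x. ennreal (f x) \<partial>count_space UNIV) = \<infinity>")
  case True
  have "\<not> f summable_on UNIV"
  proof
    assume "f summable_on UNIV"
    then have "(\<lambda>x. norm (f x)) summable_on UNIV" using nonneg by simp
    then have "Infinite_Set_Sum.abs_summable_on f UNIV"
      using abs_summable_equivalent by blast
    then have "(\<integral>\<^sup>+x. ennreal (norm (f x)) \<partial>count_space UNIV) < \<infinity>"
      by (simp add: abs_summable_on_def integrable_iff_bounded)
    then show False using True nonneg by simp
  qed
  then show ?thesis using True by (simp add: infsum_not_exists)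
next
  case False
  then have "Infinite_Set_Sum.abs_summable_on f UNIV"
    using nonneg by (simp add: abs_summable_on_def integrable_iff_bounded top.not_eq_extremum)
  then show ?thesis
    using False nonneg by (simp add: infsetsum_infsum[symmetric] infsetsum_conv_nn_integral)
qed

lemma measurable_sum_int [measurable]:
  fixes g :: "'i \<Rightarrow> 'b \<Rightarrow> int"
  assumes "finite I" "\<And>i. i \<in> I \<Longrightarrow> g i \<in> measurable N (count_space UNIV)"
  shows "(\<lambda>x. \<Sum>i\<in>I. g i x) \<in> measurable N (count_space UNIV)"
  using assms
proof (induction I rule: finite_induct)
  case (insert i I)
  then have "g i \<in> measurable N (count_space UNIV)"
    and "(\<lambda>x. \<Sum>i\<in>I. g i x) \<in> measurable N (count_space UNIV)"
    by auto
  then show ?case using insert(1,2) by simp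
qed simp

lemma (in prob_space) indep_var_sum_component:
  fixes X :: "'i \<Rightarrow> 'a \<Rightarrow> int"
  assumes ind: "indep_vars (\<lambda>_. count_space UNIV) X J"
    and "finite I" "I \<subseteq> J" "j \<in> J" "j \<notin> I"
  shows "indep_var (count_space UNIV) (\<lambda>\<omega>. \<Sum>i\<in>I. X i \<omega>) (count_space UNIV) (X j)"
proof -
  have "indep_var (PiM I (\<lambda>_. count_space UNIV)) (\<lambda>\<omega>. restrict (\<lambda>i. X i \<omega>) I)
                  (PiM {j} (\<lambda>_. count_space UNIV)) (\<lambda>\<omega>. restrict (\<lambda>i. X i \<omega>) {j})"
    using assms by (intro indep_var_restrict[OF ind]) auto
  moreover have "(\<lambda>f. \<Sum>i\<in>I. f i :: int) \<in> measurable (PiM I (\<lambda>_. count_space UNIV)) (count_space UNIV)"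
    using \<open>finite I\<close> by measurable
  moreover have "(\<lambda>f. f j) \<in> measurable (PiM {j} (\<lambda>_. count_space UNIV)) (count_space UNIV)"
    by (rule measurable_component_singleton) simp
  ultimately have "indep_var (count_space UNIV) ((\<lambda>f. \<Sum>i\<in>I. f i) \<circ> (\<lambda>\<omega>. restrict (\<lambda>i. X i \<omega>) I))
                             (count_space UNIV) ((\<lambda>f. f j) \<circ> (\<lambda>\<omega>. restrict (\<lambda>i. X i \<omega>) {j}))"
    by (rule indep_var_compose)
  then show ?thesis by (simp add: comp_def cong: sum.cong)
qed

context prob_space
begin

abbreviation point_emeasure :: "('a \<Rightarrow> int) \<Rightarrow> int \<Rightarrow> ennreal" where
  "point_emeasure Z z \<equiv> emeasure M {x\<in>space M. Z x = z}"

definition collision_prob :: "('a \<Rightarrow> int) \<Rightarrow> ennreal" where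
  "collision_prob Z = (\<integral>\<^sup>+z. (point_emeasure Z z)\<^sup>2 \<partial>count_space UNIV)"

lemma collision_entropy_eq_collision_prob:
  "collision_entropy M Z = - ln (enn2real (collision_prob Z))"
proof -
  have "(\<Sum>\<^sub>\<infinity>z\<in>UNIV. (measure M {x \<in> space M. Z x = z})\<^sup>2)
      = enn2real (\<integral>\<^sup>+z. ennreal ((measure M {x \<in> space M. Z x = z})\<^sup>2) \<partial>count_space UNIV)"
    by (rule infsum_nonneg_eq_enn2real_nn_integral) simp
  then show ?thesis
    unfolding collision_entropy_def collision_prob_def
    by (simp add: emeasure_eq_measure ennreal_power)
qed

lemma nn_integral_int_rv:
  fixes Z :: "'a \<Rightarrow> int"
  assumes Z [measurable]: "Z \<in> measurable M (count_space UNIV)"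
  shows "(\<integral>\<^sup>+\<omega>. a (Z \<omega>) \<partial>M) = (\<integral>\<^sup>+y. a y * point_emeasure Z y \<partial>count_space UNIV)"
proof -
  have "(\<integral>\<^sup>+\<omega>. a (Z \<omega>) \<partial>M)
      = (\<integral>\<^sup>+\<omega>. (\<integral>\<^sup>+y. a y * indicator {x\<in>space M. Z x = y} \<omega> \<partial>count_space UNIV) \<partial>M)"
  proof (rule nn_integral_cong)
    fix \<omega> assume "\<omega> \<in> space M"
    then have "(\<integral>\<^sup>+y. a y * indicator {x\<in>space M. Z x = y} \<omega> \<partial>count_space UNIV)
             = (\<integral>\<^sup>+y. a y * indicator {Z \<omega>} y \<partial>count_space UNIV)"
      by (intro nn_integral_cong) (auto split: split_indicator)
    then show "a (Z \<omega>) = (\<integral>\<^sup>+y. a y * indicator {x\<in>space M. Z x = y} \<omega> \<partial>count_space UNIV)"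
      by simp
  qed
  also have "\<dots> = (\<integral>\<^sup>+y. (\<integral>\<^sup>+\<omega>. a y * indicator {x\<in>space M. Z x = y} \<omega> \<partial>M) \<partial>count_space UNIV)"
    by (intro nn_integral_count_space_nn_integral) measurable
  also have "\<dots> = (\<integral>\<^sup>+y. a y * point_emeasure Z y \<partial>count_space UNIV)"
    by (intro nn_integral_cong nn_integral_cmult_indicator) measurable
  finally show ?thesis .
qed

lemma nn_integral_point_emeasure_eq_1:
  fixes Z :: "'a \<Rightarrow> int"
  assumes "Z \<in> measurable M (count_space UNIV)"
  shows "(\<integral>\<^sup>+y. point_emeasure Z y \<partial>count_space UNIV) = 1"
  using nn_integral_int_rv[OF assms, of "\<lambda>_. 1"] by (simp add: emeasure_space_1)

lemma point_emeasure_indep_pair: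
  fixes S Y :: "'a \<Rightarrow> int"
  assumes "indep_var (count_space UNIV) S (count_space UNIV) Y"
  shows "emeasure M {x\<in>space M. S x = a \<and> Y x = b} = point_emeasure S a * point_emeasure Y b"
proof -
  have "prob ((\<lambda>x. (S x, Y x)) -` ({a} \<times> {b}) \<inter> space M)
      = prob (S -` {a} \<inter> space M) * prob (Y -` {b} \<inter> space M)"
    by (rule indep_varD[OF assms]) auto
  moreover have "(\<lambda>x. (S x, Y x)) -` ({a} \<times> {b}) \<inter> space M = {x\<in>space M. S x = a \<and> Y x = b}"
    by auto
  ultimately show ?thesis
    by (simp add: emeasure_eq_measure ennreal_mult vimage_def Int_def conj_commute)
qed

lemma point_emeasure_add_indep:
  fixes S Y :: "'a \<Rightarrow> int"
  assumes ind: "indep_var (count_space UNIV) S (count_space UNIV) Y"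
    and [measurable]: "S \<in> measurable M (count_space UNIV)" "Y \<in> measurable M (count_space UNIV)"
  shows "point_emeasure (\<lambda>x. S x + Y x) z
       = (\<integral>\<^sup>+y. point_emeasure S (z - y) * point_emeasure Y y \<partial>count_space UNIV)"
proof -
  let ?E = "\<lambda>y. {x\<in>space M. S x = z - y \<and> Y x = y}"
  have "point_emeasure (\<lambda>x. S x + Y x) z = (\<integral>\<^sup>+\<omega>. indicator {x\<in>space M. S x + Y x = z} \<omega> \<partial>M)"
    by (intro nn_integral_indicator[symmetric]) measurable
  also have "\<dots> = (\<integral>\<^sup>+\<omega>. (\<integral>\<^sup>+y. indicator (?E y) \<omega> \<partial>count_space UNIV) \<partial>M)"
  proof (rule nn_integral_cong)
    fix \<omega> assume "\<omega> \<in> space M"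
    then have "(\<integral>\<^sup>+y. indicator (?E y) \<omega> \<partial>count_space UNIV)
             = (\<integral>\<^sup>+y. indicator {x\<in>space M. S x + Y x = z} \<omega> * indicator {Y \<omega>} y \<partial>count_space UNIV)"
      by (intro nn_integral_cong) (auto split: split_indicator)
    then show "indicator {x\<in>space M. S x + Y x = z} \<omega>
             = (\<integral>\<^sup>+y. indicator (?E y) \<omega> \<partial>count_space UNIV)"
      by simp
  qed
  also have "\<dots> = (\<integral>\<^sup>+y. (\<integral>\<^sup>+\<omega>. indicator (?E y) \<omega> \<partial>M) \<partial>count_space UNIV)"
    by (intro nn_integral_count_space_nn_integral) measurable
  also have "\<dots> = (\<integral>\<^sup>+y. point_emeasure S (z - y) * point_emeasure Y y \<partial>count_space UNIV)"
    using point_emeasure_indep_pair[OF ind]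
    by (intro nn_integral_cong) (simp add: nn_integral_indicator[of "?E _"])
  finally show ?thesis .
qed

lemma collision_prob_le_1:
  fixes Z :: "'a \<Rightarrow> int"
  assumes "Z \<in> measurable M (count_space UNIV)"
  shows "collision_prob Z \<le> 1"
proof -
  have "(point_emeasure Z z)\<^sup>2 \<le> point_emeasure Z z" for z
    using mult_left_mono[OF emeasure_le_1, of "point_emeasure Z z"]
    by (simp add: power2_eq_square)
  then have "collision_prob Z \<le> (\<integral>\<^sup>+z. point_emeasure Z z \<partial>count_space UNIV)"
    unfolding collision_prob_def by (intro nn_integral_mono)
  then show ?thesis using nn_integral_point_emeasure_eq_1[OF assms] by simp
qed

lemma collision_prob_pos:
  fixes Z :: "'a \<Rightarrow> int"
  assumes "Z \<in> measurable M (count_space UNIV)"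
  shows "collision_prob Z > 0"
proof (rule ccontr)
  assume "\<not> collision_prob Z > 0"
  then have "AE z in count_space UNIV. (point_emeasure Z z)\<^sup>2 = 0"
    unfolding collision_prob_def by (simp add: nn_integral_0_iff_AE)
  then have "\<And>z. point_emeasure Z z = 0" by (simp add: AE_count_space)
  then show False using nn_integral_point_emeasure_eq_1[OF assms] by simp
qed

lemma collision_prob_add_indep_le:
  fixes S Y :: "'a \<Rightarrow> int"
  assumes ind: "indep_var (count_space UNIV) S (count_space UNIV) Y"
    and S [measurable]: "S \<in> measurable M (count_space UNIV)"
    and Y [measurable]: "Y \<in> measurable M (count_space UNIV)"
  shows "collision_prob (\<lambda>x. S x + Y x) \<le> collision_prob S"
proof -
  have sq_le: "(point_emeasure (\<lambda>x. S x + Y x) z)\<^sup>2 \<le> (\<integral>\<^sup>+\<omega>. (point_emeasure S (z - Y \<omega>))\<^sup>2 \<partial>M)" for z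
  proof -
    have "point_emeasure (\<lambda>x. S x + Y x) z = (\<integral>\<^sup>+\<omega>. point_emeasure S (z - Y \<omega>) * 1 \<partial>M)"
      using point_emeasure_add_indep[OF ind S Y, of z] nn_integral_int_rv[OF Y, of "\<lambda>y. point_emeasure S (z - y)"] by simp
    also have "\<dots>\<^sup>2 \<le> (\<integral>\<^sup>+\<omega>. (point_emeasure S (z - Y \<omega>))\<^sup>2 \<partial>M) * (\<integral>\<^sup>+\<omega>. 1\<^sup>2 \<partial>M)"
      by (rule Cauchy_Schwarz_nn_integral) measurable
    finally show ?thesis by (simp add: emeasure_space_1)
  qed
  have "collision_prob (\<lambda>x. S x + Y x)
      \<le> (\<integral>\<^sup>+z. (\<integral>\<^sup>+\<omega>. (point_emeasure S (z - Y \<omega>))\<^sup>2 \<partial>M) \<partial>count_space UNIV)"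
    unfolding collision_prob_def by (intro nn_integral_mono sq_le)
  also have "\<dots> = (\<integral>\<^sup>+\<omega>. (\<integral>\<^sup>+z. (point_emeasure S (z - Y \<omega>))\<^sup>2 \<partial>count_space UNIV) \<partial>M)"
    by (rule nn_integral_count_space_nn_integral[symmetric]) measurable
  also have "\<dots> = (\<integral>\<^sup>+\<omega>. collision_prob S \<partial>M)"
  proof (rule nn_integral_cong)
    fix \<omega>
    have "bij_betw (\<lambda>z. z - Y \<omega>) UNIV UNIV"
      by (rule bij_betwI[where g="\<lambda>z. z + Y \<omega>"]) auto
    then show "(\<integral>\<^sup>+z. (point_emeasure S (z - Y \<omega>))\<^sup>2 \<partial>count_space UNIV) = collision_prob S"
      unfolding collision_prob_def by (rule nn_integral_bij_count_space)
  qed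
  also have "\<dots> = collision_prob S" by (simp add: emeasure_space_1)
  finally show ?thesis .
qed

lemma collision_entropy_add_indep_ge:
  fixes S Y :: "'a \<Rightarrow> int"
  assumes ind: "indep_var (count_space UNIV) S (count_space UNIV) Y"
    and S: "S \<in> measurable M (count_space UNIV)" and Y: "Y \<in> measurable M (count_space UNIV)"
  shows "collision_entropy M S \<le> collision_entropy M (\<lambda>x. S x + Y x)"
proof -
  have le: "collision_prob (\<lambda>x. S x + Y x) \<le> collision_prob S"
    using collision_prob_add_indep_le[OF ind S Y] .
  have "collision_prob S < \<top>"
    using collision_prob_le_1[OF S] by (simp add: order_le_less_trans)
  moreover have "0 < collision_prob (\<lambda>x. S x + Y x)"
    using S Y by (intro collision_prob_pos) measurable
  ultimately have "0 < enn2real (collision_prob (\<lambda>x. S x + Y x))"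
    and "enn2real (collision_prob (\<lambda>x. S x + Y x)) \<le> enn2real (collision_prob S)"
    using le by (auto simp: enn2real_positive_iff intro: enn2real_mono le_less_trans)
  then show ?thesis
    unfolding collision_entropy_eq_collision_prob by simp
qed

end

theorem lemma5:
  fixes M :: "'a measure" and X :: "nat \<Rightarrow> 'a \<Rightarrow> int" and n :: nat
  assumes "prob_space M"
    and "prob_space.indep_vars M (\<lambda>_. count_space UNIV) X {1..}"
    and "\<And>i. i \<ge> 1 \<Longrightarrow> distr M (count_space UNIV) (X i) = distr M (count_space UNIV) (X 1)"
    and "n \<ge> 1"
  shows "collision_entropy M (\<lambda>\<omega>. \<Sum>i=1..n. X i \<omega>)
           \<le> collision_entropy M (\<lambda>\<omega>. \<Sum>i=1..n+1. X i \<omega>)"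
proof -
  interpret prob_space M by fact
  have ind: "indep_vars (\<lambda>_. count_space UNIV) X {1..}" by fact
  then have [measurable]: "X i \<in> measurable M (count_space UNIV)" if "i \<ge> 1" for i
    using that unfolding indep_vars_def by auto
  have "collision_entropy M (\<lambda>\<omega>. \<Sum>i=1..n. X i \<omega>)
      \<le> collision_entropy M (\<lambda>\<omega>. (\<Sum>i=1..n. X i \<omega>) + X (n+1) \<omega>)"
    by (intro collision_entropy_add_indep_ge indep_var_sum_component[OF ind]) auto
  then show ?thesis by simp
qed

end
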